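(* Let $\{X_n\}_{n\in\mathbb N}$ be a sequence of finite metric spaces with $|X_n|\to\infty$ as $n\to\infty$. Let $X=\bigsqcup_{n\in\mathbb N}X_n$ be a coarse disjoint union, and let $P_X$ be the averaging projection of the sequence $\{X_n\}_{n\in\mathbb N}$. Then $P_X$ is quasi-local if and only if $$0=\lim_{R\to+\infty}\sup\left\{\frac{|A||B|}{|X_n|^2}:\ n\in\mathbb N,\ A,B\subseteq X_n,\ d(A,B)\geq R\right\}.$$
   Context: A coarse disjoint union of finite metric spaces $(X_n,d_n)$ is the set $X=\bigsqcup_n X_n$ with a metric $d$ that restricts to $d_n$ on each $X_n$ and satisfies $d(X_n,X_m)\to\infty$ as $n+m\to\infty$ with $m\neq n$. For a finite subset $F$ of a set $Y$, $P_F\in\mathfrak B(\ell^2(Y))$ is the orthogonal projection onto the span of $\chi_F$, i.e. $(P_F)_{x,y}=1/|F|$ if $x,y\in F$ and $0$ otherwise. The averaging projection of the sequence is $P_X=\sum_n P_{X_n}$ (strong operator topology sum) on $\ell^2(X)$. For $A\subseteq X$, $\chi_A$ also denotes the multiplication operator by the characteristic function of $A$. An operator $T\in\mathfrak B(\ell^2(X))$ has $(R,\varepsilon)$-propagation if $\|\chi_AT\chi_B\|\leq\varepsilon$ for all $A,B\subseteq X$ with $d(A,B)\geq R$; $T$ is quasi-local if for every $\varepsilon>0$ there is $R>0$ such that $T$ has $(R,\varepsilon)$-propagation. $|A|$ denotes cardinality. *)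

theory Defs
  imports "HOL-Analysis.Analysis"
begin

definition metric_on :: "('a \<Rightarrow> 'a \<Rightarrow> real) \<Rightarrow> bool" where
  "metric_on d \<longleftrightarrow> (\<forall>x y. 0 \<le> d x y) \<and> (\<forall>x y. d x y = 0 \<longleftrightarrow> x = y)
     \<and> (\<forall>x y. d x y = d y x) \<and> (\<forall>x y z. d x z \<le> d x y + d y z)"

definition coarse_disjoint_union :: "('a \<Rightarrow> 'a \<Rightarrow> real) \<Rightarrow> (nat \<Rightarrow> 'a set) \<Rightarrow> bool" where
  "coarse_disjoint_union d X \<longleftrightarrow> metric_on d
     \<and> (\<forall>n. finite (X n))
     \<and> (\<forall>n m. n \<noteq> m \<longrightarrow> X n \<inter> X m = {})
     \<and> (\<Union>n. X n) = UNIV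
     \<and> (\<forall>K. \<exists>N. \<forall>n m. n \<noteq> m \<and> N \<le> n + m \<longrightarrow> (\<forall>x\<in>X n. \<forall>y\<in>X m. K \<le> d x y))"

text \<open>d(A,B) \<ge> R, where d(A,B) is the infimum of d a b over a in A, b in B
  (with the convention inf of the empty set = +infinity).\<close>
definition setdist_ge :: "('a \<Rightarrow> 'a \<Rightarrow> real) \<Rightarrow> 'a set \<Rightarrow> 'a set \<Rightarrow> real \<Rightarrow> bool" where
  "setdist_ge d A B R \<longleftrightarrow> (\<forall>a\<in>A. \<forall>b\<in>B. R \<le> d a b)"

definition is_ell2 :: "('a \<Rightarrow> complex) \<Rightarrow> bool" where
  "is_ell2 f \<longleftrightarrow> (\<lambda>x. (cmod (f x))\<^sup>2) summable_on UNIV"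

definition ell2_norm :: "('a \<Rightarrow> complex) \<Rightarrow> real" where
  "ell2_norm f = sqrt (infsum (\<lambda>x. (cmod (f x))\<^sup>2) UNIV)"

definition op_norm :: "(('a \<Rightarrow> complex) \<Rightarrow> ('a \<Rightarrow> complex)) \<Rightarrow> real" where
  "op_norm T = Sup {ell2_norm (T f) | f. is_ell2 f \<and> ell2_norm f \<le> 1}"

definition chi :: "'a set \<Rightarrow> ('a \<Rightarrow> complex) \<Rightarrow> ('a \<Rightarrow> complex)" where
  "chi A f = (\<lambda>x. if x \<in> A then f x else 0)"

definition proj_avg :: "'a set \<Rightarrow> ('a \<Rightarrow> complex) \<Rightarrow> ('a \<Rightarrow> complex)" where
  "proj_avg F f = (\<lambda>x. if x \<in> F then (\<Sum>y\<in>F. f y) / of_nat (card F) else 0)"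

text \<open>Averaging projection P_X = sum over n of P_{X_n} (the strong sum, evaluated pointwise).\<close>
definition averaging_projection :: "(nat \<Rightarrow> 'a set) \<Rightarrow> ('a \<Rightarrow> complex) \<Rightarrow> ('a \<Rightarrow> complex)" where
  "averaging_projection X f = (\<lambda>x. infsum (\<lambda>n. proj_avg (X n) f x) UNIV)"

definition has_prop :: "('a \<Rightarrow> 'a \<Rightarrow> real) \<Rightarrow> (('a \<Rightarrow> complex) \<Rightarrow> ('a \<Rightarrow> complex)) \<Rightarrow> real \<Rightarrow> real \<Rightarrow> bool" where
  "has_prop d T R \<epsilon> \<longleftrightarrow> (\<forall>A B. setdist_ge d A B R \<longrightarrow> op_norm (chi A \<circ> T \<circ> chi B) \<le> \<epsilon>)"

definition quasi_local :: "('a \<Rightarrow> 'a \<Rightarrow> real) \<Rightarrow> (('a \<Rightarrow> complex) \<Rightarrow> ('a \<Rightarrow> complex)) \<Rightarrow> bool" where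
  "quasi_local d T \<longleftrightarrow> (\<forall>\<epsilon>>0. \<exists>R>0. has_prop d T R \<epsilon>)"

end

theory Submission
  imports Defs
begin

text \<open>On each piece X n the operator chi A \<circ> P_X \<circ> chi B is the rank-one map
  f \<mapsto> (\<Sum>y\<in>B \<inter> X n. f y) / |X n| \<cdot> \<chi>(A \<inter> X n), whose norm is
  sqrt (|A \<inter> X n| |B \<inter> X n|) / |X n| by Cauchy-Schwarz, with equality at the normalised
  characteristic function of B \<inter> X n. The pieces are orthogonal, so the norm of the whole
  operator is the supremum of these piecewise norms. Hence P_X has (R,\<epsilon>)-propagation
  exactly when the supremum S(R) in the statement is at most \<epsilon>^2, and since S is
  antitone and nonnegative, quasi-locality is equivalent to S(R) \<rightarrow> 0.\<close>

lemma has_sum_finite_support: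
  assumes "finite S" "\<And>x. x \<notin> S \<Longrightarrow> h x = 0"
  shows "(h has_sum sum h S) UNIV"
  by (rule has_sum_finite_neutralI) (use assms in auto)

lemma norm_sum_squared_le:
  fixes f :: "'a \<Rightarrow> 'b::real_normed_vector"
  shows "(norm (sum f S))\<^sup>2 \<le> real (card S) * (\<Sum>y\<in>S. (norm (f y))\<^sup>2)"
proof -
  have "(norm (sum f S))\<^sup>2 \<le> (\<Sum>y\<in>S. norm (f y))\<^sup>2"
    by (simp add: power_mono norm_sum)
  also have "\<dots> \<le> (\<Sum>y\<in>S. (norm (f y))\<^sup>2) * real (card S)"
    by (rule sum_squared_le_sum_of_squares)
  finally show ?thesis by (simp add: mult.commute)
qed

lemma card_mult_card_div_square_le_1:
  assumes "finite S" "A \<subseteq> S" "B \<subseteq> S"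
  shows "real (card A * card B) / (real (card S))\<^sup>2 \<le> 1"
proof -
  have "card A * card B \<le> card S * card S"
    using assms by (intro mult_le_mono card_mono)
  then have "real (card A * card B) \<le> (real (card S))\<^sup>2"
    by (simp add: power2_eq_square flip: of_nat_mult)
  then show ?thesis
    by (cases "card S = 0") (simp_all add: divide_le_eq_1)
qed

lemma antimono_tendsto_zero_iff:
  fixes g :: "real \<Rightarrow> real"
  assumes "antimono g" "\<And>R. 0 \<le> g R"
  shows "(g \<longlongrightarrow> 0) at_top \<longleftrightarrow> (\<forall>e>0. \<exists>R>0. g R \<le> e)"
proof
  assume "(g \<longlongrightarrow> 0) at_top"
  show "\<forall>e>0. \<exists>R>0. g R \<le> e"
  proof (intro allI impI)
    fix e :: real assume "e > 0"
    with \<open>(g \<longlongrightarrow> 0) at_top\<close> have "\<forall>\<^sub>F R in at_top. g R < e"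
      by (simp add: order_tendsto_iff)
    then obtain R where "\<And>R'. R' \<ge> R \<Longrightarrow> g R' < e"
      by (auto simp: eventually_at_top_linorder)
    then show "\<exists>R>0. g R \<le> e"
      by (intro exI[of _ "max R 1"]) (simp add: less_imp_le)
  qed
next
  assume small: "\<forall>e>0. \<exists>R>0. g R \<le> e"
  show "(g \<longlongrightarrow> 0) at_top"
  proof (rule order_tendstoI)
    fix e :: real assume "e > 0"
    then obtain R where R: "g R \<le> e / 2" using small half_gt_zero by blast
    have "g R' < e" if "R \<le> R'" for R'
      using antimonoD[OF assms(1) that] R \<open>e > 0\<close> by linarith
    then show "\<forall>\<^sub>F R' in at_top. g R' < e"
      by (auto simp: eventually_at_top_linorder)
  next
    fix e :: real assume "e < 0"
    then show "\<forall>\<^sub>F R' in at_top. e < g R'"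
      using assms(2) by (intro always_eventually allI) (rule less_le_trans)
  qed
qed

lemma ell2_finite_support:
  assumes "finite S" "\<And>x. x \<notin> S \<Longrightarrow> f x = 0"
  shows "is_ell2 f" "ell2_norm f = sqrt (\<Sum>x\<in>S. (cmod (f x))\<^sup>2)"
proof -
  have "((\<lambda>x. (cmod (f x))\<^sup>2) has_sum (\<Sum>x\<in>S. (cmod (f x))\<^sup>2)) UNIV"
    by (rule has_sum_finite_support) (use assms in auto)
  then show "is_ell2 f" "ell2_norm f = sqrt (\<Sum>x\<in>S. (cmod (f x))\<^sup>2)"
    unfolding is_ell2_def ell2_norm_def by (simp_all add: has_sum_imp_summable infsumI)
qed

lemma op_norm_le:
  assumes "\<And>f. is_ell2 f \<Longrightarrow> ell2_norm f \<le> 1 \<Longrightarrow> ell2_norm (T f) \<le> M"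
  shows "op_norm T \<le> M"
proof -
  have "is_ell2 (\<lambda>_. 0)" "ell2_norm (\<lambda>_. 0) \<le> 1"
    by (simp_all add: is_ell2_def ell2_norm_def)
  then show ?thesis
    unfolding op_norm_def by (intro cSup_least) (use assms in blast)+
qed

lemma ell2_norm_le_op_norm:
  assumes "\<And>f. is_ell2 f \<Longrightarrow> ell2_norm f \<le> 1 \<Longrightarrow> ell2_norm (T f) \<le> M"
    and "is_ell2 f" "ell2_norm f \<le> 1"
  shows "ell2_norm (T f) \<le> op_norm T"
proof -
  have "bdd_above {ell2_norm (T f) |f. is_ell2 f \<and> ell2_norm f \<le> 1}"
    by (rule bdd_aboveI[where M = M]) (use assms(1) in blast)
  then show ?thesis
    unfolding op_norm_def by (rule cSup_upper[rotated]) (use assms(2,3) in blast)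
qed

lemma ell2_norm_le_sqrt:
  assumes "infsum (\<lambda>x. (cmod (g x))\<^sup>2) UNIV \<le> c * infsum (\<lambda>x. (cmod (f x))\<^sup>2) UNIV"
    and "0 \<le> c" "ell2_norm f \<le> 1"
  shows "ell2_norm g \<le> sqrt c"
proof -
  have "0 \<le> infsum (\<lambda>x. (cmod (f x))\<^sup>2) UNIV"
    by (rule infsum_nonneg) simp
  moreover from this have "infsum (\<lambda>x. (cmod (f x))\<^sup>2) UNIV \<le> 1"
    using assms(3) unfolding ell2_norm_def by simp
  ultimately have "c * infsum (\<lambda>x. (cmod (f x))\<^sup>2) UNIV \<le> c"
    using assms(2) by (simp add: mult_left_le)
  with assms(1) show ?thesis
    unfolding ell2_norm_def by simp
qed

definition separated_ratios :: "('a \<Rightarrow> 'a \<Rightarrow> real) \<Rightarrow> (nat \<Rightarrow> 'a set) \<Rightarrow> real \<Rightarrow> real set" where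
  "separated_ratios d X R = {real (card A * card B) / (real (card (X n)))\<^sup>2 | n A B.
     A \<subseteq> X n \<and> B \<subseteq> X n \<and> setdist_ge d A B R}"

locale finite_partition =
  fixes X :: "nat \<Rightarrow> 'a set"
  assumes finite_piece [simp]: "finite (X n)"
    and disjoint_pieces: "n \<noteq> m \<Longrightarrow> X n \<inter> X m = {}"
    and pieces_cover: "(\<Union>n. X n) = UNIV"

lemma coarse_disjoint_union_finite_partition:
  "coarse_disjoint_union d X \<Longrightarrow> finite_partition X"
  unfolding coarse_disjoint_union_def finite_partition_def by blast

context finite_partition
begin

abbreviation compression :: "'a set \<Rightarrow> 'a set \<Rightarrow> ('a \<Rightarrow> complex) \<Rightarrow> ('a \<Rightarrow> complex)" where
  "compression A B \<equiv> chi A \<circ> averaging_projection X \<circ> chi B"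

lemma averaging_projection_apply:
  assumes "x \<in> X m"
  shows "averaging_projection X h x = (\<Sum>y\<in>X m. h y) / of_nat (card (X m))"
proof -
  have "proj_avg (X n) h x = 0" if "n \<notin> {m}" for n
  proof -
    have "x \<notin> X n" using disjoint_pieces[of n m] that assms by blast
    then show ?thesis by (simp add: proj_avg_def)
  qed
  from has_sum_finite_support[of "{m}", OF _ this]
  have "((\<lambda>n. proj_avg (X n) h x) has_sum proj_avg (X m) h x) UNIV"
    by simp
  then have "averaging_projection X h x = proj_avg (X m) h x"
    unfolding averaging_projection_def by (rule infsumI)
  with assms show ?thesis
    by (simp add: proj_avg_def)
qed

lemma compression_apply:
  assumes "x \<in> X m"
  shows "compression A B f x =
    (if x \<in> A then (\<Sum>y\<in>X m \<inter> B. f y) / of_nat (card (X m)) else 0)"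
proof -
  have "(\<Sum>y\<in>X m. chi B f y) = (\<Sum>y\<in>X m \<inter> B. f y)"
    using sum.inter_restrict[of "X m" f B] by (simp add: chi_def)
  moreover have "compression A B f x = (if x \<in> A then averaging_projection X (chi B f) x else 0)"
    by (simp add: chi_def)
  ultimately show ?thesis
    using averaging_projection_apply[OF assms, of "chi B f"] by presburger
qed

lemma piece_sum_compression_le:
  assumes "real (card (A \<inter> X m) * card (B \<inter> X m)) / (real (card (X m)))\<^sup>2 \<le> c"
  shows "(\<Sum>x\<in>X m. (cmod (compression A B f x))\<^sup>2) \<le> c * (\<Sum>x\<in>X m. (cmod (f x))\<^sup>2)"
proof -
  define s where "s = (\<Sum>y\<in>X m \<inter> B. f y)"
  define k where "k = real (card (X m))"
  define Q where "Q = (\<Sum>x\<in>X m. (cmod (f x))\<^sup>2)"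
  have "Q \<ge> 0" by (simp add: Q_def sum_nonneg)
  have "(\<Sum>x\<in>X m. (cmod (compression A B f x))\<^sup>2) = (\<Sum>x\<in>X m. if x \<in> A then (cmod s)\<^sup>2 / k\<^sup>2 else 0)"
  proof (rule sum.cong[OF refl])
    fix x assume "x \<in> X m"
    show "(cmod (compression A B f x))\<^sup>2 = (if x \<in> A then (cmod s)\<^sup>2 / k\<^sup>2 else 0)"
      unfolding compression_apply[OF \<open>x \<in> X m\<close>]
      by (simp add: s_def k_def norm_divide power_divide)
  qed
  also have "\<dots> = real (card (A \<inter> X m)) * (cmod s)\<^sup>2 / k\<^sup>2"
    using sum.inter_restrict[of "X m" "\<lambda>_. (cmod s)\<^sup>2 / k\<^sup>2" A] by (simp add: Int_commute)
  also have "\<dots> \<le> real (card (A \<inter> X m)) * (real (card (X m \<inter> B)) * Q) / k\<^sup>2"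
  proof -
    have "(cmod s)\<^sup>2 \<le> real (card (X m \<inter> B)) * (\<Sum>x\<in>X m \<inter> B. (cmod (f x))\<^sup>2)"
      unfolding s_def by (rule norm_sum_squared_le)
    also have "\<dots> \<le> real (card (X m \<inter> B)) * Q"
      unfolding Q_def by (intro mult_left_mono sum_mono2) auto
    finally show ?thesis
      by (intro divide_right_mono mult_left_mono) auto
  qed
  also have "\<dots> = real (card (A \<inter> X m) * card (B \<inter> X m)) / (real (card (X m)))\<^sup>2 * Q"
    by (simp add: k_def Int_commute)
  also have "\<dots> \<le> c * Q"
    using assms \<open>Q \<ge> 0\<close> by (rule mult_right_mono)
  finally show ?thesis unfolding Q_def .
qed

lemma infsum_le_if_piece_sums_le:
  fixes h q :: "'a \<Rightarrow> real"
  assumes "\<And>x. 0 \<le> h x" "\<And>x. 0 \<le> q x" "q summable_on UNIV" "0 \<le> c"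
    and piece_le: "\<And>n. sum h (X n) \<le> c * sum q (X n)"
  shows "infsum h UNIV \<le> c * infsum q UNIV"
proof -
  obtain piece where piece: "\<And>x. x \<in> X (piece x)"
    using pieces_cover by (metis UNIV_I UN_E)
  have finite_sum_le: "sum h F \<le> c * infsum q UNIV" if "finite F" for F
  proof -
    define U where "U = (\<Union>n\<in>piece ` F. X n)"
    have "finite U" using \<open>finite F\<close> by (simp add: U_def)
    have pieces_disjoint_on: "disjoint_family_on X (piece ` F)"
      using disjoint_pieces by (auto simp: disjoint_family_on_def)
    have "sum h F \<le> sum h U"
      using piece \<open>finite U\<close> assms(1) by (intro sum_mono2) (auto simp: U_def)
    also have "\<dots> = (\<Sum>n\<in>piece ` F. sum h (X n))"
      unfolding U_def using \<open>finite F\<close> pieces_disjoint_on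
      by (intro sum.UNION_disjoint_family) auto
    also have "\<dots> \<le> (\<Sum>n\<in>piece ` F. c * sum q (X n))"
      by (intro sum_mono piece_le)
    also have "\<dots> = c * sum q U"
      unfolding U_def sum_distrib_left[symmetric] using \<open>finite F\<close> pieces_disjoint_on
      by (subst sum.UNION_disjoint_family) auto
    also have "\<dots> \<le> c * infsum q UNIV"
      using assms(2-4) \<open>finite U\<close> by (intro mult_left_mono finite_sum_le_infsum) auto
    finally show ?thesis .
  qed
  then have "h summable_on UNIV"
    using assms(1) by (intro nonneg_bdd_above_summable_on bdd_aboveI) auto
  then show ?thesis
    using finite_sum_le by (rule infsum_le_finite_sums)
qed

lemma ell2_norm_compression_le:
  assumes ratio_le: "\<And>n. real (card (A \<inter> X n) * card (B \<inter> X n)) / (real (card (X n)))\<^sup>2 \<le> c"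
    and "is_ell2 f" "ell2_norm f \<le> 1"
  shows "ell2_norm (compression A B f) \<le> sqrt c"
proof (rule ell2_norm_le_sqrt)
  show "0 \<le> c"
    by (rule order_trans[OF _ ratio_le[of 0]]) simp
  then show "infsum (\<lambda>x. (cmod (compression A B f x))\<^sup>2) UNIV \<le> c * infsum (\<lambda>x. (cmod (f x))\<^sup>2) UNIV"
    using \<open>is_ell2 f\<close> unfolding is_ell2_def
    by (intro infsum_le_if_piece_sums_le piece_sum_compression_le ratio_le) auto
qed (use assms in auto)

lemma op_norm_compression_le:
  assumes "\<And>n. real (card (A \<inter> X n) * card (B \<inter> X n)) / (real (card (X n)))\<^sup>2 \<le> c"
  shows "op_norm (compression A B) \<le> sqrt c"
  using ell2_norm_compression_le[OF assms] by (rule op_norm_le)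

lemma op_norm_compression_ge:
  assumes "A \<subseteq> X m" "B \<subseteq> X m"
  shows "sqrt (real (card A * card B) / (real (card (X m)))\<^sup>2) \<le> op_norm (compression A B)"
proof -
  define b where "b = real (card B)"
  define k where "k = real (card (X m))"
  have "finite A" "finite B"
    using assms by (auto intro: finite_subset)
  have "b \<ge> 0" by (simp add: b_def)
  \<comment> \<open>For B = {} the junk value 1 / sqrt 0 = 0 gives f = 0, so no case split is needed.\<close>
  define f where "f = (\<lambda>x. if x \<in> B then complex_of_real (1 / sqrt b) else 0)"
  have f_support: "\<And>x. x \<notin> B \<Longrightarrow> f x = 0" by (simp add: f_def)
  have "(\<Sum>x\<in>B. (cmod (f x))\<^sup>2) \<le> 1"
    by (cases "b = 0") (simp_all add: f_def b_def power_divide norm_divide)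
  then have "is_ell2 f" "ell2_norm f \<le> 1"
    using ell2_finite_support[OF \<open>finite B\<close> f_support] by simp_all
  have image: "compression A B f x = (if x \<in> A then complex_of_real (sqrt b / k) else 0)" for x
  proof (cases "x \<in> A")
    case True
    have "(\<Sum>y\<in>X m \<inter> B. f y) = complex_of_real (b * (1 / sqrt b))"
      using assms(2) by (simp add: f_def b_def Int_absorb1)
    also have "\<dots> = complex_of_real (sqrt b)"
      using \<open>b \<ge> 0\<close> by (simp add: real_div_sqrt)
    finally show ?thesis
      using True assms(1) compression_apply[of x m] by (auto simp: k_def)
  next
    case False
    then show ?thesis by (simp add: chi_def)
  qed
  have "ell2_norm (compression A B f) = sqrt (\<Sum>x\<in>A. (cmod (compression A B f x))\<^sup>2)"
    by (rule ell2_finite_support[OF \<open>finite A\<close>]) (simp add: chi_def)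
  also have "(\<Sum>x\<in>A. (cmod (compression A B f x))\<^sup>2) = real (card A) * b / k\<^sup>2"
    unfolding image using \<open>b \<ge> 0\<close> by (simp add: norm_divide power_divide)
  finally have "ell2_norm (compression A B f) = sqrt (real (card A * card B) / (real (card (X m)))\<^sup>2)"
    by (simp add: b_def k_def)
  moreover have "ell2_norm (compression A B g) \<le> 1" if "is_ell2 g" "ell2_norm g \<le> 1" for g
    using ell2_norm_compression_le[where c = 1, OF card_mult_card_div_square_le_1 that] by simp
  then have "ell2_norm (compression A B f) \<le> op_norm (compression A B)"
    using \<open>is_ell2 f\<close> \<open>ell2_norm f \<le> 1\<close> by (rule ell2_norm_le_op_norm)
  ultimately show ?thesis by simp
qed

lemma zero_in_separated_ratios: "0 \<in> separated_ratios d X R"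
proof -
  have "real (card {} * card {}) / (real (card (X 0)))\<^sup>2 \<in> separated_ratios d X R"
    unfolding separated_ratios_def
    by (intro CollectI exI[of _ 0] exI[of _ "{}"] conjI) (auto simp: setdist_ge_def)
  then show ?thesis by simp
qed

lemma separated_ratios_le_1:
  assumes "r \<in> separated_ratios d X R"
  shows "r \<le> 1"
proof -
  from assms obtain n A B where "r = real (card A * card B) / (real (card (X n)))\<^sup>2"
    and "A \<subseteq> X n" "B \<subseteq> X n"
    unfolding separated_ratios_def by blast
  then show ?thesis
    using card_mult_card_div_square_le_1[OF finite_piece] by blast
qed

lemma bdd_above_separated_ratios: "bdd_above (separated_ratios d X R)"
  using separated_ratios_le_1 by (rule bdd_aboveI)

lemma Sup_separated_ratios_nonneg: "0 \<le> Sup (separated_ratios d X R)"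
  using zero_in_separated_ratios bdd_above_separated_ratios by (rule cSup_upper)

lemma antimono_Sup_separated_ratios: "antimono (\<lambda>R. Sup (separated_ratios d X R))"
proof
  fix R R' :: real assume "R \<le> R'"
  then have "separated_ratios d X R' \<subseteq> separated_ratios d X R"
    unfolding separated_ratios_def setdist_ge_def by fastforce
  then show "Sup (separated_ratios d X R') \<le> Sup (separated_ratios d X R)"
    using zero_in_separated_ratios[of d R'] bdd_above_separated_ratios[of d R]
    by (intro cSup_subset_mono) auto
qed

lemma has_prop_averaging_projection_iff:
  assumes "0 \<le> \<epsilon>"
  shows "has_prop d (averaging_projection X) R \<epsilon> \<longleftrightarrow> Sup (separated_ratios d X R) \<le> \<epsilon>\<^sup>2"
proof
  assume propagation: "has_prop d (averaging_projection X) R \<epsilon>"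
  show "Sup (separated_ratios d X R) \<le> \<epsilon>\<^sup>2"
  proof (rule cSup_least)
    show "separated_ratios d X R \<noteq> {}"
      using zero_in_separated_ratios by blast
  next
    fix r assume "r \<in> separated_ratios d X R"
    then obtain n A B where r: "r = real (card A * card B) / (real (card (X n)))\<^sup>2"
      and "A \<subseteq> X n" "B \<subseteq> X n" "setdist_ge d A B R"
      unfolding separated_ratios_def by blast
    then have "sqrt r \<le> op_norm (compression A B)"
      using op_norm_compression_ge by simp
    also have "\<dots> \<le> \<epsilon>"
      using propagation \<open>setdist_ge d A B R\<close> unfolding has_prop_def by blast
    finally show "r \<le> \<epsilon>\<^sup>2" by (rule sqrt_le_D)
  qed
next
  assume Sup_le: "Sup (separated_ratios d X R) \<le> \<epsilon>\<^sup>2"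
  show "has_prop d (averaging_projection X) R \<epsilon>"
    unfolding has_prop_def
  proof (intro allI impI)
    fix A B assume "setdist_ge d A B R"
    have "real (card (A \<inter> X n) * card (B \<inter> X n)) / (real (card (X n)))\<^sup>2 \<le> \<epsilon>\<^sup>2" for n
    proof -
      have "setdist_ge d (A \<inter> X n) (B \<inter> X n) R"
        using \<open>setdist_ge d A B R\<close> unfolding setdist_ge_def by blast
      then have "real (card (A \<inter> X n) * card (B \<inter> X n)) / (real (card (X n)))\<^sup>2
          \<in> separated_ratios d X R"
        unfolding separated_ratios_def by blast
      then show ?thesis
        using bdd_above_separated_ratios Sup_le by (meson cSup_upper order_trans)
    qed
    then have "op_norm (compression A B) \<le> sqrt (\<epsilon>\<^sup>2)"
      by (rule op_norm_compression_le)
    then show "op_norm (compression A B) \<le> \<epsilon>"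
      using assms by simp
  qed
qed

end

theorem proposition3p8:
  fixes d :: "'a \<Rightarrow> 'a \<Rightarrow> real" and X :: "nat \<Rightarrow> 'a set"
  assumes "coarse_disjoint_union d X"
    and "filterlim (\<lambda>n. card (X n)) at_top sequentially"
  shows "quasi_local d (averaging_projection X) \<longleftrightarrow>
    ((\<lambda>R::real. Sup {real (card A * card B) / (real (card (X n)))\<^sup>2 | n A B.
         A \<subseteq> X n \<and> B \<subseteq> X n \<and> setdist_ge d A B R}) \<longlongrightarrow> 0) at_top"
proof -
  interpret finite_partition X
    using assms(1) by (rule coarse_disjoint_union_finite_partition)
  define S where "S = (\<lambda>R. Sup (separated_ratios d X R))"
  have "quasi_local d (averaging_projection X) \<longleftrightarrow> (\<forall>\<epsilon>>0. \<exists>R>0. S R \<le> \<epsilon>\<^sup>2)"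
    unfolding quasi_local_def S_def by (simp add: has_prop_averaging_projection_iff)
  also have "\<dots> \<longleftrightarrow> (\<forall>e>0. \<exists>R>0. S R \<le> e)"
    by (metis real_sqrt_gt_0_iff real_sqrt_pow2 less_eq_real_def zero_less_power)
  also have "\<dots> \<longleftrightarrow> (S \<longlongrightarrow> 0) at_top"
    unfolding S_def
    by (rule antimono_tendsto_zero_iff[symmetric])
      (rule antimono_Sup_separated_ratios, rule Sup_separated_ratios_nonneg)
  finally show ?thesis
    unfolding S_def separated_ratios_def .
qed

end
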